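(* Let $q$ be a prime power, $m$ a positive integer, $n=q^m-1$, and $\delta$ an integer with $2\le\delta\le q^{\lceil m/2\rceil}+1$ (and $\delta\le n$). Then the primitive, narrow-sense BCH code $\mathcal{BCH}(n,q;\delta)$ over $\mathbf{F}_q$ has dimension $$k=q^m-1-m\left\lceil(\delta-1)(1-1/q)\right\rceil.$$
   Context: Let $\alpha$ be a primitive element of $\mathbf{F}_{q^m}$ and $n=q^m-1$; $C_x=\{xq^k\bmod n\mid k\in\mathbf{Z}\}$ is the $q$-ary cyclotomic coset of $x$ modulo $n$. For $2\le\delta\le n$, $\mathcal{BCH}(n,q;\delta)$ is the cyclic code of length $n$ over $\mathbf{F}_q$ with generator polynomial $\prod_{z\in Z}(x-\alpha^z)$, where $Z=C_1\cup\cdots\cup C_{\delta-1}$. *)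

theory Defs
  imports "HOL-Computational_Algebra.Computational_Algebra"
begin

definition cyc_coset :: "nat \<Rightarrow> nat \<Rightarrow> nat \<Rightarrow> nat set" where
  "cyc_coset q n x = {(x * q ^ k) mod n | k. True}"

definition bch_Z :: "nat \<Rightarrow> nat \<Rightarrow> nat \<Rightarrow> nat set" where
  "bch_Z q n \<delta> = (\<Union>i\<in>{1..\<delta>-1}. cyc_coset q n i)"

definition primitive_elem :: "'b::field \<Rightarrow> bool" where
  "primitive_elem \<alpha> \<longleftrightarrow> (\<forall>y. y \<noteq> 0 \<longrightarrow> (\<exists>i::nat. y = \<alpha> ^ i))"

definition bch_gen :: "nat \<Rightarrow> nat \<Rightarrow> nat \<Rightarrow> 'b::field \<Rightarrow> 'b poly" where
  "bch_gen q n \<delta> \<alpha> = (\<Prod>z\<in>bch_Z q n \<delta>. [:- (\<alpha> ^ z), 1:])"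

text \<open>The cyclic code of length n over the base field 'a (embedded into 'b via \<iota>)
  with generator polynomial g: codewords are the polynomials c of degree < n over 'a
  that are divisible by g (after embedding into 'b[x]).\<close>
definition BCH :: "('a::field \<Rightarrow> 'b::field) \<Rightarrow> nat \<Rightarrow> nat \<Rightarrow> nat \<Rightarrow> 'b \<Rightarrow> 'a poly set" where
  "BCH \<iota> q n \<delta> \<alpha> = {c. degree c < n \<and> bch_gen q n \<delta> \<alpha> dvd map_poly \<iota> c}"

definition code_dim :: "'a::field poly set \<Rightarrow> nat" where
  "code_dim C = vector_space.dim (smult :: 'a \<Rightarrow> 'a poly \<Rightarrow> 'a poly) C"

end

theory Submission
  imports Defs "HOL-Number_Theory.Cong"
begin

text \<open>
  The generator polynomial \<open>g = \<Prod>z\<in>Z. (X - \<alpha>\<^sup>z)\<close> is fixed by the Frobenius map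
  \<open>y \<mapsto> y\<^sup>q\<close>, because \<open>Z\<close> is a union of \<open>q\<close>-cyclotomic cosets and is therefore permuted by
  \<open>z \<mapsto> qz mod n\<close>. Hence \<open>g\<close> has its coefficients in \<open>\<bold>F\<^sub>q\<close>, and the code, consisting of
  the multiples of \<open>g\<close> of degree below \<open>n\<close>, has dimension \<open>n - |Z|\<close>.

  To count \<open>Z\<close>: every \<open>i \<le> \<delta> - 1\<close> lies in the coset of its \<open>q\<close>-free part, and the cosets
  of the \<open>q\<close>-free \<open>x \<le> q\<^bsup>\<lceil>m/2\<rceil>\<^esup>\<close> are pairwise disjoint and of size \<open>m\<close>. Indeed, for
  \<open>0 < j < m\<close> the residue of \<open>x q\<^sup>j\<close> modulo \<open>n\<close> is at least \<open>q\<^sup>j\<close>; so \<open>y \<equiv> x q\<^sup>j\<close> forces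
  \<open>y \<ge> q\<^sup>j\<close> and, as \<open>x \<equiv> y q\<^bsup>m-j\<^esup>\<close>, also \<open>x \<ge> q\<^bsup>m-j\<^esup>\<close>, which is impossible for \<open>q\<close>-free
  \<open>x, y \<le> q\<^bsup>\<lceil>m/2\<rceil>\<^esup>\<close> since \<open>j\<close> or \<open>m - j\<close> is at least \<open>\<lceil>m/2\<rceil>\<close>.
  So \<open>|Z| = m (\<delta> - 1 - \<lfloor>(\<delta> - 1)/q\<rfloor>) = m \<lceil>(\<delta> - 1)(1 - 1/q)\<rceil>\<close>.
\<close>

section \<open>Cyclotomic cosets with small representatives\<close>

lemma mult_power_mod_power_minus_one:
  fixes q m k x :: nat
  assumes "0 < q"
  shows "x * q ^ k mod (q ^ m - 1) = x * q ^ (k mod m) mod (q ^ m - 1)"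
proof -
  define n where "n = q ^ m - 1"
  have "q ^ m = n + 1"
    using assms by (simp add: n_def)
  then have "q ^ m mod n = 1 mod n"
    by (simp only: mod_add_self1)
  then have "q ^ (m * (k div m)) mod n = 1 mod n"
    by (metis power_mod power_mult power_one)
  then have "x * q ^ k mod n = x * (1 * q ^ (k mod m)) mod n"
    by (metis div_mult_mod_eq mod_mult_left_eq mod_mult_right_eq mult.commute power_add)
  then show ?thesis
    by (simp add: n_def)
qed

lemma mult_power_mod_period:
  fixes q m t s x :: nat
  assumes "0 < q"
  shows "x * q ^ (m * t + s) mod (q ^ m - 1) = x * q ^ s mod (q ^ m - 1)"
  using mult_power_mod_power_minus_one[OF assms, of x "m * t + s" m]
    mult_power_mod_power_minus_one[OF assms, of x s m]
  by simp

lemma power_le_mult_power_mod: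
  fixes q m j x :: nat
  assumes x: "x < q ^ m - 1" "\<not> q dvd x" and j: "j < m"
  shows "q ^ j \<le> x * q ^ j mod (q ^ m - 1)"
proof (rule ccontr)
  define n where "n = q ^ m - 1"
  define y where "y = x * q ^ j mod n"
  assume "\<not> q ^ j \<le> x * q ^ j mod (q ^ m - 1)"
  then have "y < q ^ j"
    by (simp add: y_def n_def)
  have "0 < q"
    using x by (cases "q = 0") (simp_all add: power_0_left)
  \<comment> \<open>Then \<open>y q\<^bsup>m-j\<^esup> \<le> n\<close> is congruent to \<open>x q\<^sup>m \<equiv> x\<close>, so it equals \<open>x\<close> or \<open>x = 0\<close>; either way \<open>q\<close> divides \<open>x\<close>.\<close>
  have "y * q ^ (m - j) mod n = x * q ^ m mod n"
    using j by (simp add: y_def mod_mult_left_eq mult.assoc flip: power_add)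
  also have "\<dots> = x"
    using mult_power_mod_period[OF \<open>0 < q\<close>, of x m 1 0] x by (simp add: n_def)
  finally have rot: "y * q ^ (m - j) mod n = x" .
  have "y * q ^ (m - j) < q ^ j * q ^ (m - j)"
    using \<open>y < q ^ j\<close> \<open>0 < q\<close> by simp
  also have "\<dots> = n + 1"
    using j x by (simp add: n_def flip: power_add)
  finally consider "y * q ^ (m - j) < n" | "y * q ^ (m - j) = n"
    by linarith
  then show False
  proof cases
    case 1
    then have "x = y * q ^ (m - j)"
      using rot by simp
    then show False
      using x j by simp
  next
    case 2
    then show False
      using rot x by simp
  qed
qed

lemma mult_power_mod_cancel:
  fixes q m i k x y :: nat
  assumes "0 < q" "0 < m" and eq: "x * q ^ i mod (q ^ m - 1) = y * q ^ k mod (q ^ m - 1)"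
    and "i \<le> k"
  shows "x mod (q ^ m - 1) = y * q ^ (k - i) mod (q ^ m - 1)"
proof -
  define n where "n = q ^ m - 1"
  have "i \<le> m * i"
    using \<open>0 < m\<close> by simp
  have "x * q ^ (m * i + 0) mod n = x * q ^ i * q ^ (m * i - i) mod n"
    using \<open>i \<le> m * i\<close> by (simp add: mult.assoc flip: power_add)
  also have "\<dots> = y * q ^ k * q ^ (m * i - i) mod n"
    using arg_cong[OF eq, of "\<lambda>a. a * q ^ (m * i - i) mod n"]
    by (simp add: n_def mod_mult_left_eq)
  also have "\<dots> = y * q ^ (m * i + (k - i)) mod n"
    using \<open>i \<le> m * i\<close> \<open>i \<le> k\<close>
    by (simp add: mult.assoc add.commute flip: power_add)
  finally show ?thesis
    unfolding n_def mult_power_mod_period[OF \<open>0 < q\<close>] by simp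
qed

definition small_coset_rep :: "nat \<Rightarrow> nat \<Rightarrow> nat \<Rightarrow> bool" where
  "small_coset_rep q m x \<longleftrightarrow> x < q ^ m - 1 \<and> x \<le> q ^ ((m + 1) div 2) \<and> \<not> q dvd x"

lemma small_coset_rep_pos:
  assumes "small_coset_rep q m x"
  shows "0 < q" "0 < m"
proof -
  show "0 < q"
    using assms by (cases "q = 0") (simp_all add: small_coset_rep_def power_0_left)
  show "0 < m"
    using assms by (cases "m = 0") (simp_all add: small_coset_rep_def)
qed

lemma small_coset_rep_not_rotation:
  assumes x: "small_coset_rep q m x" and y: "small_coset_rep q m y"
    and j: "(m + 1) div 2 \<le> j" "j < m"
  shows "y \<noteq> x * q ^ j mod (q ^ m - 1)"
proof
  assume rot: "y = x * q ^ j mod (q ^ m - 1)"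
  have "q ^ j \<le> y"
    using power_le_mult_power_mod[of x q m j] x j rot by (simp add: small_coset_rep_def)
  moreover have "y \<le> q ^ j"
    using y power_increasing[OF j(1), of q] small_coset_rep_pos[OF x]
    by (simp add: small_coset_rep_def)
  ultimately have "y = q ^ j"
    by simp
  moreover have "0 < j"
    using j by simp
  ultimately show False
    using y by (simp add: small_coset_rep_def)
qed

lemma small_coset_rep_rotation_eq_le:
  assumes x: "small_coset_rep q m x" and y: "small_coset_rep q m y"
    and "k < m" "i \<le> k"
    and eq: "x * q ^ i mod (q ^ m - 1) = y * q ^ k mod (q ^ m - 1)"
  shows "x = y \<and> i = k"
proof -
  define n where "n = q ^ m - 1"
  define d where "d = k - i"
  note pos = small_coset_rep_pos[OF x]
  have "x < n" "y < n"
    using x y by (simp_all add: small_coset_rep_def n_def)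
  have x_rot: "x = y * q ^ d mod n"
    using mult_power_mod_cancel[OF pos eq \<open>i \<le> k\<close>] \<open>x < n\<close>
    by (simp add: n_def d_def)
  have "y * q ^ k mod n = x * q ^ (m + i) mod n"
    using eq mult_power_mod_period[OF pos(1), of x m 1 i] by (simp add: n_def)
  then have y_rot: "y = x * q ^ (m - d) mod n"
    using mult_power_mod_cancel[OF pos, of y k x "m + i"] \<open>y < n\<close> \<open>k < m\<close> \<open>i \<le> k\<close>
    by (simp add: n_def d_def)
  have "d < m"
    using \<open>k < m\<close> by (simp add: d_def)
  consider "d = 0" | "(m + 1) div 2 \<le> d" | "0 < d" "(m + 1) div 2 \<le> m - d"
    by linarith
  then show ?thesis
  proof cases
    case 1
    then show ?thesis
      using x_rot \<open>y < n\<close> \<open>i \<le> k\<close> by (simp add: d_def)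
  next
    case 2
    then show ?thesis
      using small_coset_rep_not_rotation[OF y x 2 \<open>d < m\<close>] x_rot by (simp add: n_def)
  next
    case 3
    have "m - d < m"
      using 3 \<open>d < m\<close> by simp
    then show ?thesis
      using small_coset_rep_not_rotation[OF x y 3(2)] y_rot by (simp add: n_def)
  qed
qed

lemma small_coset_rep_rotation_eq:
  assumes "small_coset_rep q m x" "small_coset_rep q m y" "i < m" "k < m"
    and "x * q ^ i mod (q ^ m - 1) = y * q ^ k mod (q ^ m - 1)"
  shows "x = y \<and> i = k"
  using small_coset_rep_rotation_eq_le[of q m x y k i] small_coset_rep_rotation_eq_le[of q m y x i k]
    assms by (cases "i \<le> k") auto

lemma cyc_coset_eq_image:
  assumes "0 < q" "0 < m"
  shows "cyc_coset q (q ^ m - 1) x = (\<lambda>j. x * q ^ j mod (q ^ m - 1)) ` {..<m}"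
proof -
  have "x * q ^ k mod (q ^ m - 1) \<in> (\<lambda>j. x * q ^ j mod (q ^ m - 1)) ` {..<m}" for k
    using mult_power_mod_power_minus_one[OF \<open>0 < q\<close>, of x k m] \<open>0 < m\<close> by simp
  then show ?thesis
    unfolding cyc_coset_def by blast
qed

lemma card_cyc_coset:
  assumes "small_coset_rep q m x"
  shows "card (cyc_coset q (q ^ m - 1) x) = m"
proof -
  have "inj_on (\<lambda>j. x * q ^ j mod (q ^ m - 1)) {..<m}"
    using small_coset_rep_rotation_eq[OF assms assms] by (intro inj_onI) auto
  then show ?thesis
    unfolding cyc_coset_eq_image[OF small_coset_rep_pos[OF assms]] by (simp add: card_image)
qed

lemma cyc_coset_disjoint:
  assumes "small_coset_rep q m x" "small_coset_rep q m y" "x \<noteq> y"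
  shows "cyc_coset q (q ^ m - 1) x \<inter> cyc_coset q (q ^ m - 1) y = {}"
  unfolding cyc_coset_eq_image[OF small_coset_rep_pos[OF assms(1)]]
  using small_coset_rep_rotation_eq[OF assms(1,2)] assms(3) by auto

lemma bch_Z_eq_UN_not_dvd:
  fixes q n \<delta> :: nat
  assumes "2 \<le> q"
  shows "bch_Z q n \<delta> = (\<Union>x\<in>{x\<in>{1..\<delta> - 1}. \<not> q dvd x}. cyc_coset q n x)"
proof (intro equalityI subsetI)
  fix z
  assume "z \<in> bch_Z q n \<delta>"
  then obtain i k where i: "i \<in> {1..\<delta> - 1}" and z: "z = i * q ^ k mod n"
    unfolding bch_Z_def cyc_coset_def by auto
  define e where "e = multiplicity q i"
  have "i \<noteq> 0" "\<not> is_unit q"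
    using i assms by auto
  then obtain x where x: "i = q ^ e * x" "\<not> q dvd x"
    unfolding e_def by (rule multiplicity_decompose')
  have "x \<le> i"
    using x(1) \<open>i \<noteq> 0\<close> by (metis dvd_imp_le dvd_triv_right neq0_conv)
  then have "x \<le> \<delta> - 1"
    using i by simp
  moreover have "x \<noteq> 0"
    using x(2) by (metis dvd_0_right)
  ultimately have "x \<in> {x\<in>{1..\<delta> - 1}. \<not> q dvd x}"
    using x(2) by simp
  moreover have "z = x * q ^ (e + k) mod n"
    using z x(1) by (simp add: power_add ac_simps)
  ultimately show "z \<in> (\<Union>x\<in>{x\<in>{1..\<delta> - 1}. \<not> q dvd x}. cyc_coset q n x)"
    unfolding cyc_coset_def by blast
qed (auto simp: bch_Z_def)

lemma card_not_dvd_atLeastAtMost: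
  fixes q N :: nat
  assumes "0 < q"
  shows "card {x\<in>{1..N}. \<not> q dvd x} = N - N div q"
proof -
  define M where "M = {x\<in>{1..N}. q dvd x}"
  have "M = (\<lambda>k. q * k) ` {1..N div q}"
  proof (intro equalityI subsetI)
    fix x
    assume "x \<in> M"
    then obtain k where "x = q * k" "1 \<le> q * k" "q * k \<le> N"
      by (auto simp: M_def)
    moreover from this have "k \<in> {1..N div q}"
      using assms by (simp add: less_eq_div_iff_mult_less_eq mult.commute)
    ultimately show "x \<in> (\<lambda>k. q * k) ` {1..N div q}"
      by blast
  next
    fix x
    assume "x \<in> (\<lambda>k. q * k) ` {1..N div q}"
    then obtain k where "x = q * k" "k \<in> {1..N div q}"
      by blast
    then show "x \<in> M"
      using assms by (simp add: M_def less_eq_div_iff_mult_less_eq mult.commute)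
  qed
  then have "card M = N div q"
    using assms by (simp add: card_image inj_on_def)
  moreover have "card ({1..N} - M) = card {1..N} - card M"
    by (rule card_Diff_subset) (auto simp: M_def)
  moreover have "{x\<in>{1..N}. \<not> q dvd x} = {1..N} - M"
    by (auto simp: M_def)
  ultimately show ?thesis
    by simp
qed

lemma card_bch_Z:
  fixes q m \<delta> :: nat
  assumes "2 \<le> q" "0 < m" "\<delta> \<le> q ^ ((m + 1) div 2) + 1" "\<delta> \<le> q ^ m - 1"
  shows "card (bch_Z q (q ^ m - 1) \<delta>) = m * ((\<delta> - 1) - (\<delta> - 1) div q)"
proof -
  define S where "S = {x\<in>{1..\<delta> - 1}. \<not> q dvd x}"
  have small: "small_coset_rep q m x" if "x \<in> S" for x
    using that assms(3,4) by (auto simp: S_def small_coset_rep_def)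
  have "card (bch_Z q (q ^ m - 1) \<delta>) = (\<Sum>x\<in>S. card (cyc_coset q (q ^ m - 1) x))"
    unfolding bch_Z_eq_UN_not_dvd[OF assms(1)] S_def[symmetric]
  proof (rule card_UN_disjoint)
    show "finite S"
      by (simp add: S_def)
    have "0 < q"
      using assms(1) by simp
    then show "\<forall>x\<in>S. finite (cyc_coset q (q ^ m - 1) x)"
      unfolding cyc_coset_eq_image[OF \<open>0 < q\<close> assms(2)] by simp
    show "\<forall>x\<in>S. \<forall>y\<in>S. x \<noteq> y \<longrightarrow> cyc_coset q (q ^ m - 1) x \<inter> cyc_coset q (q ^ m - 1) y = {}"
      using cyc_coset_disjoint small by blast
  qed
  also have "\<dots> = m * card S"
    using card_cyc_coset small by simp
  also have "card S = (\<delta> - 1) - (\<delta> - 1) div q"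
    unfolding S_def using assms(1) by (intro card_not_dvd_atLeastAtMost) simp
  finally show ?thesis .
qed

lemma ceiling_mult_one_minus_inverse:
  fixes q N :: nat
  shows "\<lceil>real N * (1 - 1 / real q)\<rceil> = int (N - N div q)"
proof -
  have "\<lceil>real N * (1 - 1 / real q)\<rceil> = \<lceil>- (real N / real q) + of_int (int N)\<rceil>"
    by (simp add: algebra_simps)
  also have "\<dots> = int N - \<lfloor>real N / real q\<rfloor>"
    by (simp only: ceiling_add_of_int ceiling_minus)
  also have "\<dots> = int (N - N div q)"
    by (simp add: floor_divide_of_nat_eq of_nat_diff)
  finally show ?thesis .
qed

section \<open>Finite fields and their embeddings\<close>

lemma power_card_UNIV_eq_self:
  fixes x :: "'a::field"
  assumes "finite (UNIV :: 'a set)"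
  shows "x ^ card (UNIV :: 'a set) = x"
proof (cases "x = 0")
  case True
  then show ?thesis
    using assms by (simp add: power_0_left)
next
  case False
  define U where "U = UNIV - {0 :: 'a}"
  have "finite U" "0 \<notin> U"
    using assms by (simp_all add: U_def)
  obtain c where c: "card (UNIV :: 'a set) = Suc c"
    using assms finite_UNIV_card_ge_0 gr0_implies_Suc by blast
  then have "card U = c"
    using assms by (simp add: U_def card_Diff_singleton)
  have "(\<Prod>y\<in>U. x * y) = (\<Prod>y\<in>U. y)"
    by (rule prod.reindex_bij_witness[of _ "\<lambda>y. y / x" "\<lambda>y. x * y"]) (simp_all add: U_def False)
  then have "x ^ c * (\<Prod>y\<in>U. y) = 1 * (\<Prod>y\<in>U. y)"
    by (simp add: prod.distrib \<open>card U = c\<close>)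
  moreover have "(\<Prod>y\<in>U. y) \<noteq> 0"
    using \<open>finite U\<close> \<open>0 \<notin> U\<close> by simp
  ultimately have "x ^ c = 1"
    by simp
  then show ?thesis
    by (simp add: c)
qed

lemma of_nat_card_UNIV_eq_0: "of_nat (card (UNIV :: 'a::{finite,ring_1} set)) = (0 :: 'a)"
proof -
  have "(\<Sum>y\<in>UNIV. 1 + y) = (\<Sum>y\<in>UNIV. y :: 'a)"
    by (rule sum.reindex_bij_witness[of _ "\<lambda>y. y - 1" "\<lambda>y. 1 + y"]) auto
  then show ?thesis
    by (simp add: sum.distrib)
qed

lemma CHAR_eq_prime_of_card:
  assumes "prime p" and "card (UNIV :: 'a::{finite,field} set) = p ^ k"
  shows "CHAR('a) = p"
proof -
  have "prime CHAR('a)"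
    by (intro prime_CHAR_semidom finite_imp_CHAR_pos) simp
  moreover have "CHAR('a) dvd p ^ k"
    using of_nat_card_UNIV_eq_0[where 'a = 'a] unfolding assms(2) of_nat_eq_0_iff_char_dvd .
  ultimately show ?thesis
    using assms(1) by (metis prime_dvd_power primes_dvd_imp_eq)
qed

lemma primitive_elem_power_card_minus_one:
  fixes \<alpha> :: "'a::{finite,field}"
  assumes "primitive_elem \<alpha>" "2 < card (UNIV :: 'a set)"
  shows "\<alpha> ^ (card (UNIV :: 'a set) - 1) = 1"
proof -
  have "\<alpha> \<noteq> 0"
  proof
    assume "\<alpha> = 0"
    have "y \<in> {0, 1}" for y :: 'a
    proof (cases "y = 0")
      case False
      then obtain i where "y = 0 ^ i"
        using assms(1) \<open>\<alpha> = 0\<close> unfolding primitive_elem_def by blast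
      then show ?thesis
        by (simp add: power_0_left)
    qed simp
    then have "card (UNIV :: 'a set) \<le> card {0, 1 :: 'a}"
      by (intro card_mono) auto
    then show False
      using assms(2) by simp
  qed
  moreover have "\<alpha> * \<alpha> ^ (card (UNIV :: 'a set) - 1) = \<alpha> * 1"
    using power_card_UNIV_eq_self[OF finite_UNIV, of \<alpha>] assms(2)
    by (simp flip: power_Suc)
  ultimately show ?thesis
    by simp
qed

locale field_embedding =
  fixes \<iota> :: "'a::field \<Rightarrow> 'b::field"
  assumes inj: "inj \<iota>"
    and hom_add: "\<iota> (x + y) = \<iota> x + \<iota> y"
    and hom_mult: "\<iota> (x * y) = \<iota> x * \<iota> y"
    and hom_one: "\<iota> 1 = 1"
begin

lemma hom_zero: "\<iota> 0 = 0"
  using hom_add[of 0 0] by (simp only: add_0_left add_cancel_right_right)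

lemma hom_eq_0_iff: "\<iota> x = 0 \<longleftrightarrow> x = 0"
  using inj hom_zero by (metis injD)

lemma hom_uminus: "\<iota> (- x) = - \<iota> x"
  using hom_add[of "- x" x] by (simp add: hom_zero eq_neg_iff_add_eq_0)

lemma hom_power: "\<iota> (x ^ k) = \<iota> x ^ k"
  by (induction k) (simp_all add: hom_one hom_mult)

lemma degree_map_poly_hom: "degree (map_poly \<iota> p) = degree p"
  by (simp add: degree_map_poly hom_eq_0_iff)

lemma map_poly_hom_eq_0_iff: "map_poly \<iota> p = 0 \<longleftrightarrow> p = 0"
  by (simp add: map_poly_eq_0_iff hom_zero hom_eq_0_iff)

lemma map_poly_hom_add: "map_poly \<iota> (p + q) = map_poly \<iota> p + map_poly \<iota> q"
  by (intro poly_eqI) (simp add: coeff_map_poly hom_zero hom_add)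

lemma map_poly_hom_mult: "map_poly \<iota> (p * q) = map_poly \<iota> p * map_poly \<iota> q"
proof (induction p rule: pCons_induct)
  case (pCons a p)
  then show ?case
    by (simp add: map_poly_pCons hom_zero map_poly_hom_add map_poly_smult hom_mult)
qed simp

lemma map_poly_hom_prod: "map_poly \<iota> (\<Prod>i\<in>A. f i) = (\<Prod>i\<in>A. map_poly \<iota> (f i))"
  by (induction A rule: infinite_finite_induct) (simp_all add: hom_one map_poly_hom_mult)

lemma map_poly_hom_dvd_iff: "map_poly \<iota> a dvd map_poly \<iota> b \<longleftrightarrow> a dvd b"
proof
  assume dvd: "map_poly \<iota> a dvd map_poly \<iota> b"
  have "map_poly \<iota> b = map_poly \<iota> a * map_poly \<iota> (b div a) + map_poly \<iota> (b mod a)"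
    by (metis div_mult_mod_eq map_poly_hom_add map_poly_hom_mult mult.commute)
  with dvd have dvd_mod: "map_poly \<iota> a dvd map_poly \<iota> (b mod a)"
    by (metis dvd_add_right_iff dvd_triv_left)
  show "a dvd b"
  proof (rule ccontr)
    assume "\<not> a dvd b"
    then have "a \<noteq> 0" "b mod a \<noteq> 0"
      using dvd by (auto simp: mod_eq_0_iff_dvd map_poly_hom_eq_0_iff)
    then have "degree (b mod a) < degree a"
      by (rule degree_mod_less')
    moreover have "degree (map_poly \<iota> a) \<le> degree (map_poly \<iota> (b mod a))"
      using dvd_mod \<open>b mod a \<noteq> 0\<close> by (intro dvd_imp_degree_le) (simp_all add: map_poly_hom_eq_0_iff)
    ultimately show False
      by (simp add: degree_map_poly_hom)
  qed
qed (auto simp: map_poly_hom_mult)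

lemma range_eq_power_card_fixed_points:
  assumes "finite (UNIV :: 'a set)"
  shows "range \<iota> = {y. y ^ card (UNIV :: 'a set) = y}"
proof -
  define q where "q = card (UNIV :: 'a set)"
  define P where "P = (monom 1 q - [:0, 1:] :: 'b poly)"
  have "2 \<le> q"
    using card_mono[OF assms, of "{0, 1}"] by (simp add: q_def)
  then have "coeff P q = 1"
    by (simp add: P_def coeff_monom coeff_pCons split: nat.split)
  then have "P \<noteq> 0"
    by auto
  have roots: "{y. y ^ q = y} = {y. poly P y = 0}"
    by (simp add: P_def poly_monom)
  show ?thesis
    unfolding q_def[symmetric]
  proof (rule card_seteq)
    show "finite {y :: 'b. y ^ q = y}"
      unfolding roots by (rule poly_roots_finite[OF \<open>P \<noteq> 0\<close>])
    show "range \<iota> \<subseteq> {y. y ^ q = y}"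
      using power_card_UNIV_eq_self[OF assms] by (auto simp: q_def simp flip: hom_power)
    have "card {y :: 'b. y ^ q = y} \<le> degree P"
      unfolding roots by (rule card_poly_roots_bound[OF \<open>P \<noteq> 0\<close>])
    also have "degree P \<le> q"
      using \<open>2 \<le> q\<close> unfolding P_def
      by (intro order.trans[OF degree_diff_le_max]) (auto simp: degree_monom_le degree_pCons_eq_if)
    also have "q = card (range \<iota>)"
      by (simp add: q_def card_image inj)
    finally show "card {y :: 'b. y ^ q = y} \<le> card (range \<iota>)" .
  qed
qed

lemma frobenius_fixed_poly_descends:
  assumes "finite (UNIV :: 'a set)"
    and fixed: "map_poly (\<lambda>y. y ^ card (UNIV :: 'a set)) g = g"
  obtains g\<^sub>0 where "g = map_poly \<iota> g\<^sub>0"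
proof
  have "0 < card (UNIV :: 'a set)"
    using assms(1) by (simp add: finite_UNIV_card_ge_0)
  have "inv \<iota> 0 = 0"
    using inv_f_f[OF inj, of 0] by (simp add: hom_zero)
  show "g = map_poly \<iota> (map_poly (inv \<iota>) g)"
  proof (rule poly_eqI)
    fix k
    have "coeff g k ^ card (UNIV :: 'a set) = coeff g k"
      using arg_cong[OF fixed, of "\<lambda>p. coeff p k"] \<open>0 < card UNIV\<close>
      by (simp add: coeff_map_poly power_0_left)
    then have "coeff g k \<in> range \<iota>"
      using range_eq_power_card_fixed_points[OF assms(1)] by simp
    then show "coeff g k = coeff (map_poly \<iota> (map_poly (inv \<iota>) g)) k"
      by (simp add: coeff_map_poly hom_zero \<open>inv \<iota> 0 = 0\<close> f_inv_into_f)
  qed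
qed

end

lemma field_embedding_frobenius:
  assumes "prime CHAR('a::field)" and "q = CHAR('a) ^ e"
  shows "field_embedding (\<lambda>x::'a. x ^ q)"
proof
  show "inj (\<lambda>x::'a. x ^ q)"
  proof (rule injI)
    fix x y :: 'a
    assume "x ^ q = y ^ q"
    moreover have "((x - y) + y) ^ q = (x - y) ^ q + y ^ q"
      by (rule freshmans_dream'[OF assms])
    ultimately have "(x - y) ^ q = 0"
      by simp
    then show "x = y"
      by simp
  qed
qed (simp_all add: freshmans_dream'[OF assms] power_mult_distrib)

section \<open>Dimension of the space of multiples of a polynomial\<close>

interpretation poly_vs: vector_space "smult :: 'a::field \<Rightarrow> 'a poly \<Rightarrow> 'a poly"
  by unfold_locales (simp_all add: smult_add_right smult_add_left)

lemma sum_monom_coeff_lessThan: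
  assumes "degree p < K \<or> p = 0"
  shows "(\<Sum>i<K. monom (coeff p i) i) = p"
proof (rule poly_eqI)
  fix j
  show "coeff (\<Sum>i<K. monom (coeff p i) i) j = coeff p j"
    using assms by (cases "j < K") (auto simp: coeff_sum coeff_monom coeff_eq_0)
qed

lemma independent_mult_monoms:
  fixes g :: "'a::field poly"
  assumes "g \<noteq> 0"
  shows "poly_vs.independent ((\<lambda>i. g * monom 1 i) ` {..<K})"
proof (rule poly_vs.independent_if_scalars_zero)
  have "inj_on (\<lambda>i. g * monom 1 i) {..<K}"
    using assms by (intro inj_onI) (simp add: monom_eq_iff')
  fix c v
  assume "(\<Sum>v\<in>(\<lambda>i. g * monom 1 i) ` {..<K}. smult (c v) v) = 0"
    and v: "v \<in> (\<lambda>i. g * monom 1 i) ` {..<K}"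
  then have "g * (\<Sum>i<K. monom (c (g * monom 1 i)) i) = 0"
    by (simp add: sum.reindex[OF \<open>inj_on _ {..<K}\<close>] sum_distrib_left smult_monom
        flip: mult_smult_right)
  then have zero: "(\<Sum>i<K. monom (c (g * monom 1 i)) i) = 0"
    using assms by simp
  obtain i where "i < K" "v = g * monom 1 i"
    using v by auto
  then have "c v = coeff (\<Sum>j<K. monom (c (g * monom 1 j)) j) i"
    by (simp add: coeff_sum coeff_monom)
  then show "c v = 0"
    by (simp add: zero)
qed simp

lemma dim_multiples_degree_less:
  fixes g :: "'a::field poly"
  assumes "g \<noteq> 0" and "degree g \<le> N"
  shows "poly_vs.dim {c. degree c < N \<and> g dvd c} = N - degree g"
proof (rule poly_vs.dim_unique[where B = "(\<lambda>i. g * monom 1 i) ` {..<N - degree g}"])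
  have degree: "degree (g * monom 1 i) = degree g + i" for i
    using assms(1) by (simp add: degree_mult_eq degree_monom_eq)
  then show "(\<lambda>i. g * monom 1 i) ` {..<N - degree g} \<subseteq> {c. degree c < N \<and> g dvd c}"
    using assms(2) by auto
  have "inj_on (\<lambda>i. g * monom 1 i) {..<N - degree g}"
    using assms(1) by (intro inj_onI) (simp add: monom_eq_iff')
  then show "card ((\<lambda>i. g * monom 1 i) ` {..<N - degree g}) = N - degree g"
    by (simp add: card_image)
  show "poly_vs.independent ((\<lambda>i. g * monom 1 i) ` {..<N - degree g})"
    by (rule independent_mult_monoms[OF assms(1)])
  show "{c. degree c < N \<and> g dvd c} \<subseteq> poly_vs.span ((\<lambda>i. g * monom 1 i) ` {..<N - degree g})"
  proof
    fix c
    assume "c \<in> {c. degree c < N \<and> g dvd c}"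
    then obtain s where "c = g * s" "degree c < N"
      by auto
    then have "degree s < N - degree g \<or> s = 0"
      using assms(1) by (auto simp: degree_mult_eq)
    then have "c = g * (\<Sum>i<N - degree g. monom (coeff s i) i)"
      by (simp add: \<open>c = g * s\<close> sum_monom_coeff_lessThan)
    also have "\<dots> = (\<Sum>i<N - degree g. smult (coeff s i) (g * monom 1 i))"
      by (simp add: sum_distrib_left smult_monom flip: mult_smult_right)
    finally show "c \<in> poly_vs.span ((\<lambda>i. g * monom 1 i) ` {..<N - degree g})"
      by (auto intro: poly_vs.span_sum poly_vs.span_scale poly_vs.span_base)
  qed
qed

section \<open>The BCH generator polynomial\<close>

lemma bch_Z_subset_lessThan: "0 < n \<Longrightarrow> bch_Z q n \<delta> \<subseteq> {..<n}"
  by (auto simp: bch_Z_def cyc_coset_def)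

lemma card_bch_Z_le: "0 < n \<Longrightarrow> card (bch_Z q n \<delta>) \<le> n"
  using card_mono[OF _ bch_Z_subset_lessThan] by fastforce

lemma bij_betw_mult_mod_bch_Z:
  assumes "coprime q n" "0 < n"
  shows "bij_betw (\<lambda>z. z * q mod n) (bch_Z q n \<delta>) (bch_Z q n \<delta>)"
proof -
  have "(\<lambda>z. z * q mod n) ` bch_Z q n \<delta> \<subseteq> bch_Z q n \<delta>"
  proof
    fix w
    assume "w \<in> (\<lambda>z. z * q mod n) ` bch_Z q n \<delta>"
    then obtain i k where "i \<in> {1..\<delta> - 1}" "w = (i * q ^ k mod n) * q mod n"
      by (auto simp: bch_Z_def cyc_coset_def)
    then have "i \<in> {1..\<delta> - 1}" "w = i * q ^ Suc k mod n"
      by (simp_all add: mod_mult_left_eq mult.assoc mult.commute[of q])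
    then show "w \<in> bch_Z q n \<delta>"
      unfolding bch_Z_def cyc_coset_def by blast
  qed
  moreover have "inj_on (\<lambda>z. z * q mod n) (bch_Z q n \<delta>)"
  proof (rule inj_onI)
    fix z z'
    assume "z \<in> bch_Z q n \<delta>" "z' \<in> bch_Z q n \<delta>" "z * q mod n = z' * q mod n"
    moreover have "bch_Z q n \<delta> \<subseteq> {..<n}"
      using bch_Z_subset_lessThan[OF assms(2)] .
    ultimately have "[z = z'] (mod n)" "z < n" "z' < n"
      using cong_mult_rcancel_nat[OF assms(1)] by (auto simp: cong_def)
    then show "z = z'"
      by (simp add: cong_def)
  qed
  moreover have "finite (bch_Z q n \<delta>)"
    using bch_Z_subset_lessThan[OF assms(2)] finite_subset by blast
  ultimately show ?thesis
    by (simp add: bij_betw_def endo_inj_surj)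
qed

lemma bch_gen_nonzero: "bch_gen q n \<delta> \<alpha> \<noteq> 0"
  by (cases "finite (bch_Z q n \<delta>)") (simp_all add: bch_gen_def)

lemma degree_bch_gen: "0 < n \<Longrightarrow> degree (bch_gen q n \<delta> \<alpha>) = card (bch_Z q n \<delta>)"
  using bch_Z_subset_lessThan[of n q \<delta>] finite_subset
  by (simp add: bch_gen_def degree_prod_eq_sum_degree)

lemma map_poly_frobenius_bch_gen:
  fixes \<alpha> :: "'b::field"
  assumes "field_embedding (\<lambda>y::'b. y ^ q)" "coprime q n" "0 < n" "\<alpha> ^ n = 1"
  shows "map_poly (\<lambda>y. y ^ q) (bch_gen q n \<delta> \<alpha>) = bch_gen q n \<delta> \<alpha>"
proof -
  interpret frob: field_embedding "\<lambda>y::'b. y ^ q"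
    by (rule assms(1))
  have "(\<alpha> ^ z) ^ q = \<alpha> ^ (z * q mod n)" for z
  proof -
    have "(\<alpha> ^ z) ^ q = \<alpha> ^ (n * (z * q div n) + z * q mod n)"
      by (simp only: mult_div_mod_eq power_mult)
    also have "\<dots> = (\<alpha> ^ n) ^ (z * q div n) * \<alpha> ^ (z * q mod n)"
      by (simp only: power_add power_mult)
    finally show ?thesis
      by (simp add: assms(4))
  qed
  then have "map_poly (\<lambda>y. y ^ q) [:- (\<alpha> ^ z), 1:] = [:- (\<alpha> ^ (z * q mod n)), 1:]" for z
    using frob.hom_zero frob.hom_one frob.hom_uminus by (simp add: map_poly_pCons)
  then have "map_poly (\<lambda>y. y ^ q) (bch_gen q n \<delta> \<alpha>)
      = (\<Prod>z\<in>bch_Z q n \<delta>. [:- (\<alpha> ^ (z * q mod n)), 1:])"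
    by (simp add: bch_gen_def frob.map_poly_hom_prod)
  also have "\<dots> = bch_gen q n \<delta> \<alpha>"
    unfolding bch_gen_def
    by (rule prod.reindex_bij_betw[OF bij_betw_mult_mod_bch_Z[OF assms(2,3)]])
  finally show ?thesis .
qed

lemma (in field_embedding) code_dim_BCH:
  fixes \<alpha> :: 'b
  assumes "finite (UNIV :: 'a set)" "card (UNIV :: 'a set) = q"
    and "prime CHAR('b)" "q = CHAR('b) ^ e"
    and "coprime q n" "0 < n" "\<alpha> ^ n = 1"
  shows "code_dim (BCH \<iota> q n \<delta> \<alpha>) = n - card (bch_Z q n \<delta>)"
proof -
  define g where "g = bch_gen q n \<delta> \<alpha>"
  have "map_poly (\<lambda>y. y ^ card (UNIV :: 'a set)) g = g"
    unfolding g_def assms(2)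
    using map_poly_frobenius_bch_gen field_embedding_frobenius[OF assms(3,4)] assms(5-7) .
  then obtain g\<^sub>0 where g: "g = map_poly \<iota> g\<^sub>0"
    using frobenius_fixed_poly_descends[OF assms(1)] by blast
  have "BCH \<iota> q n \<delta> \<alpha> = {c. degree c < n \<and> g\<^sub>0 dvd c}"
    unfolding BCH_def g_def[symmetric] g map_poly_hom_dvd_iff ..
  moreover have "degree g\<^sub>0 = card (bch_Z q n \<delta>)"
    using degree_bch_gen[OF \<open>0 < n\<close>, of q \<delta> \<alpha>] by (simp add: g_def[symmetric] g degree_map_poly_hom)
  moreover have "g\<^sub>0 \<noteq> 0"
    using bch_gen_nonzero[of q n \<delta> \<alpha>] by (auto simp: g_def[symmetric] g)
  ultimately show ?thesis
    unfolding code_dim_def by (simp add: dim_multiples_degree_less card_bch_Z_le[OF \<open>0 < n\<close>])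
qed

theorem mainTheorem6:
  fixes \<iota> :: "'a::{finite,field} \<Rightarrow> 'b::{finite,field}"
    and \<alpha> :: 'b and q m n \<delta> :: nat
  assumes "\<exists>p e. prime p \<and> e > 0 \<and> q = p ^ e"
    and "card (UNIV :: 'a set) = q"
    and "m > 0"
    and "card (UNIV :: 'b set) = q ^ m"
    and "inj \<iota>"
    and "\<And>x y. \<iota> (x + y) = \<iota> x + \<iota> y"
    and "\<And>x y. \<iota> (x * y) = \<iota> x * \<iota> y"
    and "\<iota> 1 = 1"
    and "primitive_elem \<alpha>"
    and "n = q ^ m - 1"
    and "2 \<le> \<delta>"
    and "\<delta> \<le> q ^ ((m + 1) div 2) + 1"
    and "\<delta> \<le> n"
  shows "int (code_dim (BCH \<iota> q n \<delta> \<alpha>))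
           = int (q ^ m) - 1 - int m * \<lceil>real (\<delta> - 1) * (1 - 1 / real q)\<rceil>"
proof -
  obtain p e where "prime p" "0 < e" "q = p ^ e"
    using assms(1) by blast
  then have "2 \<le> q"
    using prime_ge_2_nat[OF \<open>prime p\<close>] power_increasing[of 1 e p] by simp
  interpret \<iota>: field_embedding \<iota>
    by standard (fact assms)+
  have "CHAR('b) = p"
    using CHAR_eq_prime_of_card[OF \<open>prime p\<close>, of "e * m"] assms(4) \<open>q = p ^ e\<close>
    by (simp add: power_mult)
  have "0 < n" "card (UNIV :: 'b set) = n + 1"
    using assms(4,10,11,13) by simp_all
  have "coprime q n"
    using coprime_diff_one_left_nat[of "q ^ m"] \<open>2 \<le> q\<close> \<open>m > 0\<close> assms(10)
    by (simp add: ac_simps)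
  have "\<alpha> ^ n = 1"
    using primitive_elem_power_card_minus_one[OF assms(9)] \<open>card UNIV = n + 1\<close> assms(11,13)
    by simp
  have "code_dim (BCH \<iota> q n \<delta> \<alpha>) = n - card (bch_Z q n \<delta>)"
    using \<iota>.code_dim_BCH[OF finite_UNIV assms(2)] \<open>prime p\<close> \<open>CHAR('b) = p\<close> \<open>q = p ^ e\<close>
      \<open>coprime q n\<close> \<open>0 < n\<close> \<open>\<alpha> ^ n = 1\<close> by blast
  moreover have "card (bch_Z q n \<delta>) = m * ((\<delta> - 1) - (\<delta> - 1) div q)"
    using card_bch_Z[OF \<open>2 \<le> q\<close> \<open>m > 0\<close>] assms(10,12,13) by simp
  ultimately have "int (code_dim (BCH \<iota> q n \<delta> \<alpha>)) = int n - int m * int ((\<delta> - 1) - (\<delta> - 1) div q)"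
    using card_bch_Z_le[OF \<open>0 < n\<close>, of q \<delta>] by (simp add: of_nat_diff)
  moreover have "int n = int (q ^ m) - 1"
    using assms(10) \<open>0 < n\<close> by simp
  ultimately show ?thesis
    unfolding ceiling_mult_one_minus_inverse by linarith
qed

end
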